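(* Fix $q\in\mathbb R$ and $x,y\in\mathbb R^n$. Then (i) for every $T>0$ the set $\mathcal A^{xy}_T(q)$ is nonempty; (ii) there exist $T_0,C\in(0,\infty)$, depending on $q,x,y$, such that $S^{xy}_T(q)\le C\,T$ for all $T\ge T_0$.
   Context: Standing assumptions: $V\in C^2(\mathbb R^n;\mathbb R)$ satisfies $\lim_{|x|\to\infty}\langle\nabla V(x),x\rangle/|x|=+\infty$; $b:\mathbb R^n\to\mathbb R^n$ is a $C^1$, bounded vector field with bounded first derivatives, not conservative (not a gradient field); and $\langle\nabla V(x),b(x)\rangle=0$ for every $x$. Set $c:=-\tfrac12\nabla V+b$. For $T>0$: $H_T$ is the set of absolutely continuous $\varphi:[0,T]\to\mathbb R^n$ with $\int_0^T|\dot\varphi_t|^2dt<\infty$, $H^x_T:=\{\varphi\in H_T:\varphi_0=x\}$; $I^x_T(\varphi):=\frac12\int_0^T|\dot\varphi_t-c(\varphi_t)|^2dt$ for $\varphi\in H^x_T$; $\mathcal L_T(\varphi):=\frac2T\int_0^T\langle b(\varphi_t),\dot\varphi_t\rangle dt$; $\mathcal A^{xy}_T(q):=\{\varphi\in H^x_T:\varphi_T=y,\ \mathcal L_T(\varphi)=q\}$; $S^{xy}_T(q):=\inf\{I^x_T(\varphi):\varphi\in\mathcal A^{xy}_T(q)\}$. *)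

theory Defs
  imports "HOL-Analysis.Analysis"
begin

definition abs_cont_on :: "real set \<Rightarrow> (real \<Rightarrow> 'a::real_normed_vector) \<Rightarrow> bool" where
  "abs_cont_on S f \<longleftrightarrow>
     (\<forall>\<epsilon>>0. \<exists>\<delta>>0. \<forall>(n::nat) (a::nat \<Rightarrow> real) (b::nat \<Rightarrow> real).
        (\<forall>i<n. a i \<le> b i \<and> {a i..b i} \<subseteq> S) \<and>
        (\<forall>i<n. \<forall>j<n. i \<noteq> j \<longrightarrow> b i \<le> a j \<or> b j \<le> a i) \<and>
        (\<Sum>i<n. b i - a i) < \<delta>
        \<longrightarrow> (\<Sum>i<n. norm (f (b i) - f (a i))) < \<epsilon>)"

definition pdot :: "real \<Rightarrow> (real \<Rightarrow> 'a::real_normed_vector) \<Rightarrow> real \<Rightarrow> 'a" where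
  "pdot T \<phi> t = vector_derivative \<phi> (at t within {0..T})"

definition C1_map :: "('a::euclidean_space \<Rightarrow> 'b::euclidean_space) \<Rightarrow> bool" where
  "C1_map g \<longleftrightarrow> (\<exists>g'::'a \<Rightarrow> 'a \<Rightarrow>\<^sub>L 'b.
      (\<forall>x. (g has_derivative blinfun_apply (g' x)) (at x)) \<and> continuous_on UNIV g')"

definition H_space :: "real \<Rightarrow> (real \<Rightarrow> 'a::euclidean_space) set" where
  "H_space T = {\<phi>. abs_cont_on {0..T} \<phi> \<and>
                    (\<lambda>t. (norm (pdot T \<phi> t))\<^sup>2) integrable_on {0..T}}"

definition H_space_from :: "real \<Rightarrow> 'a::euclidean_space \<Rightarrow> (real \<Rightarrow> 'a) set" where
  "H_space_from T x = {\<phi> \<in> H_space T. \<phi> 0 = x}"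

definition rate_I :: "('a::euclidean_space \<Rightarrow> 'a) \<Rightarrow> real \<Rightarrow> (real \<Rightarrow> 'a) \<Rightarrow> real" where
  "rate_I c T \<phi> = (1/2) * integral {0..T} (\<lambda>t. (norm (pdot T \<phi> t - c (\<phi> t)))\<^sup>2)"

definition L_fun :: "('a::euclidean_space \<Rightarrow> 'a) \<Rightarrow> real \<Rightarrow> (real \<Rightarrow> 'a) \<Rightarrow> real" where
  "L_fun b T \<phi> = (2 / T) * integral {0..T} (\<lambda>t. b (\<phi> t) \<bullet> pdot T \<phi> t)"

definition A_set :: "('a::euclidean_space \<Rightarrow> 'a) \<Rightarrow> real \<Rightarrow> 'a \<Rightarrow> 'a \<Rightarrow> real \<Rightarrow> (real \<Rightarrow> 'a) set" where
  "A_set b T x y q = {\<phi> \<in> H_space_from T x. \<phi> T = y \<and> L_fun b T \<phi> = q}"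

definition S_fun :: "('a::euclidean_space \<Rightarrow> 'a) \<Rightarrow> ('a \<Rightarrow> 'a) \<Rightarrow> real \<Rightarrow> 'a \<Rightarrow> 'a \<Rightarrow> real \<Rightarrow> real" where
  "S_fun c b T x y q = Inf (rate_I c T ` A_set b T x y q)"

end

theory Submission
  imports Defs
begin

text \<open>
  The key quantity is the line integral seg b p q of b along a straight segment.  Since b is not a
  gradient field, some triangle based at y has nonzero circulation (otherwise the segment integral
  from y would be a potential of b).  Running around this triangle, and once around a triangle whose
  third vertex is moved continuously along the opposite edge, produces a closed polygonal loop at y
  with any prescribed circulation D, using a number of edges linear in the absolute value of D.

  For given T we take the polygon that first goes straight from x to y and then runs through loops
  of total circulation q T / 2 - seg b x y, each edge traversed in the same time.  Its line integral
  is q T / 2, so it lies in A_set b T x y q; this gives part (i).  The polygon has O(1 + T) edges of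
  bounded length inside a fixed ball, so its action is O(T + 1 / T), which gives part (ii).
\<close>

definition seg :: "('a::real_inner \<Rightarrow> 'a) \<Rightarrow> 'a \<Rightarrow> 'a \<Rightarrow> real" where
  "seg b p q = integral {0..1} (\<lambda>r. b (p + r *\<^sub>R (q - p)) \<bullet> (q - p))"

definition circ :: "('a::real_inner \<Rightarrow> 'a) \<Rightarrow> 'a \<Rightarrow> 'a \<Rightarrow> 'a \<Rightarrow> real" where
  "circ b p u w = seg b p u + seg b u w + seg b w p"

lemma seg_integrand_continuous:
  assumes "continuous_on UNIV b"
  shows "continuous_on S (\<lambda>r. b (p + r *\<^sub>R (q - p)) \<bullet> (q - p))"
  by (intro continuous_intros continuous_on_compose2[OF assms]) auto

lemma seg_has_integral:
  assumes "continuous_on UNIV b"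
  shows "((\<lambda>r. b (p + r *\<^sub>R (q - p)) \<bullet> (q - p)) has_integral seg b p q) {0..1}"
  unfolding seg_def
  by (intro integrable_integral integrable_continuous_interval seg_integrand_continuous assms)

lemma seg_same: "seg b p p = 0"
  by (simp add: seg_def)

text \<open>Reversing the segment (substitution r = 1 - r) changes the sign of the line integral.\<close>

lemma seg_rev:
  assumes "continuous_on UNIV b"
  shows "seg b q p = - seg b p q"
proof -
  define f where "f r = b (p + r *\<^sub>R (q - p)) \<bullet> (q - p)" for r
  have "(f has_integral seg b p q) (cbox 0 1)"
    using seg_has_integral[OF assms] unfolding f_def by simp
  from has_integral_affinity[OF this, of "-1" 1]
  have "((\<lambda>r. f (1 - r)) has_integral seg b p q) {0..1}"
    by (simp add: image_affinity_atLeastAtMost)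
  then have "((\<lambda>r. - f (1 - r)) has_integral - seg b p q) {0..1}"
    by (rule has_integral_neg)
  moreover have "- f (1 - r) = b (q + r *\<^sub>R (p - q)) \<bullet> (p - q)" for r
  proof -
    have "p + (1 - r) *\<^sub>R (q - p) = q + r *\<^sub>R (p - q)" by (simp add: algebra_simps)
    then show ?thesis unfolding f_def by (simp add: inner_minus_right[symmetric] algebra_simps)
  qed
  ultimately show ?thesis unfolding seg_def by (simp add: integral_unique)
qed

text \<open>Any D \<ge> 0 is a whole multiple of \<kappa> plus a value of a continuous g running from 0 to \<kappa>
  (floor division followed by the intermediate value theorem).\<close>

lemma multiple_plus_intermediate_value:
  fixes g :: "real \<Rightarrow> real"
  assumes "continuous_on {0..1} g" "g 0 = 0" "g 1 = \<kappa>" "\<kappa> > 0" "D \<ge> 0"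
  obtains N :: nat and s where "s \<in> {0..1}" "D = real N * \<kappa> + g s" "real N \<le> D / \<kappa>"
proof -
  define N where "N = nat \<lfloor>D / \<kappa>\<rfloor>"
  have N: "real N = of_int \<lfloor>D / \<kappa>\<rfloor>"
    using assms(4,5) by (simp add: N_def)
  have below: "real N \<le> D / \<kappa>" and above: "D / \<kappa> < real N + 1"
    unfolding N by (rule of_int_floor_le, rule real_of_int_floor_add_one_gt)
  have "g 0 \<le> D - real N * \<kappa>" "D - real N * \<kappa> \<le> g 1"
    using below above assms(2-4) by (simp_all add: field_simps)
  then obtain s where "0 \<le> s" "s \<le> 1" "g s = D - real N * \<kappa>"
    using IVT'[of g 0 _ 1] assms(1) by auto
  then show thesis using that[of s N] below by auto
qed

text \<open>A bounded, globally Lipschitz vector field; in the theorem b is such a field because it is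
  bounded and has bounded derivative.\<close>

locale bounded_lipschitz_field =
  fixes b :: "'a::euclidean_space \<Rightarrow> 'a" and L B :: real
  assumes lipschitz: "\<And>u v. norm (b u - b v) \<le> L * norm (u - v)"
    and bounded: "\<And>u. norm (b u) \<le> B"
    and L_nonneg: "L \<ge> 0"
begin

lemma continuous: "continuous_on UNIV b"
  by (rule lipschitz_on_continuous_on[of L]) (auto intro: lipschitz_onI simp: dist_norm lipschitz L_nonneg)

lemma circ_swap: "circ b p w u = - circ b p u w"
  using seg_rev[OF continuous, of p u] seg_rev[OF continuous, of u w] seg_rev[OF continuous, of w p]
  unfolding circ_def by linarith

lemma circ_degenerate: "circ b p u u = 0"
  using seg_rev[OF continuous, of p u] unfolding circ_def seg_same by linarith

lemma seg_lipschitz: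
  "\<bar>seg b p q - seg b p' q'\<bar> \<le> (L * norm (q - p) + B) * (norm (p - p') + norm (q - q'))"
proof -
  let ?f = "\<lambda>r. b (p + r *\<^sub>R (q - p)) \<bullet> (q - p)"
  let ?g = "\<lambda>r. b (p' + r *\<^sub>R (q' - p')) \<bullet> (q' - p')"
  let ?\<delta> = "norm (p - p') + norm (q - q')"
  let ?K = "(L * norm (q - p) + B) * ?\<delta>"
  have "((\<lambda>r. ?f r - ?g r) has_integral seg b p q - seg b p' q') {0..1}"
    by (intro has_integral_diff seg_has_integral continuous)
  then have "seg b p q - seg b p' q' = integral {0..1} (\<lambda>r. ?f r - ?g r)"
    by (simp add: integral_unique)
  also have "\<bar>\<dots>\<bar> \<le> ?K * (1 - 0)"
  proof (rule integral_bound[where f="\<lambda>r. ?f r - ?g r", unfolded real_norm_def])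
    show "continuous_on {0..1} (\<lambda>r. ?f r - ?g r)"
      by (intro continuous_intros seg_integrand_continuous continuous)
    fix r :: real assume r: "r \<in> {0..1}"
    define P where "P = p + r *\<^sub>R (q - p)"
    define P' where "P' = p' + r *\<^sub>R (q' - p')"
    have "P - P' = (1 - r) *\<^sub>R (p - p') + r *\<^sub>R (q - q')"
      unfolding P_def P'_def by (simp add: algebra_simps)
    then have "norm (P - P') \<le> (1 - r) * norm (p - p') + r * norm (q - q')"
      using r by (metis (no_types, lifting) abs_of_nonneg atLeastAtMost_iff diff_ge_0_iff_ge
          norm_scaleR norm_triangle_ineq order_trans)
    also have "\<dots> \<le> ?\<delta>"
      using r by (smt (verit, best) atLeastAtMost_iff mult_left_le_one_le norm_ge_zero)
    finally have PP': "norm (P - P') \<le> ?\<delta>" .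
    have "?f r - ?g r = (b P - b P') \<bullet> (q - p) + b P' \<bullet> ((p' - p) + (q - q'))"
      unfolding P_def P'_def by (simp add: algebra_simps)
    also have "\<bar>\<dots>\<bar> \<le> norm (b P - b P') * norm (q - p) + norm (b P') * norm ((p' - p) + (q - q'))"
      by (smt (verit) Cauchy_Schwarz_ineq2)
    also have "\<dots> \<le> (L * ?\<delta>) * norm (q - p) + B * ?\<delta>"
    proof (intro add_mono mult_mono)
      show "norm (b P - b P') \<le> L * ?\<delta>"
        using lipschitz[of P P'] PP' L_nonneg by (smt (verit) mult_left_mono)
      show "norm (p' - p + (q - q')) \<le> ?\<delta>"
        by (metis norm_minus_commute norm_triangle_ineq)
    qed (use bounded[of P'] L_nonneg in \<open>auto intro: order_trans[OF norm_ge_zero]\<close>)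
    finally show "\<bar>?f r - ?g r\<bar> \<le> ?K" by (simp add: algebra_simps)
  qed simp
  finally show ?thesis by simp
qed

lemma seg_continuous:
  assumes "continuous_on S p" "continuous_on S q"
  shows "continuous_on S (\<lambda>s. seg b (p s) (q s))"
  unfolding continuous_on_def
proof
  fix s0 assume "s0 \<in> S"
  then have lim_p: "(p \<longlongrightarrow> p s0) (at s0 within S)" and lim_q: "(q \<longlongrightarrow> q s0) (at s0 within S)"
    using assms by (simp_all add: continuous_on_def)
  define K where "K = L * norm (q s0 - p s0) + B"
  have "((\<lambda>s. seg b (p s) (q s) - seg b (p s0) (q s0)) \<longlongrightarrow> 0) (at s0 within S)"
  proof (rule Lim_null_comparison)
    show "\<forall>\<^sub>F s in at s0 within S.
        norm (seg b (p s) (q s) - seg b (p s0) (q s0)) \<le> K * (norm (p s - p s0) + norm (q s - q s0))"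
      using seg_lipschitz[of "p s0" "q s0"] unfolding K_def
      by (intro always_eventually allI) (simp add: abs_minus_commute norm_minus_commute)
    have "((\<lambda>s. K * (norm (p s - p s0) + norm (q s - q s0)))
        \<longlongrightarrow> K * (norm (p s0 - p s0) + norm (q s0 - q s0))) (at s0 within S)"
      by (intro tendsto_intros lim_p lim_q)
    then show "((\<lambda>s. K * (norm (p s - p s0) + norm (q s - q s0))) \<longlongrightarrow> 0) (at s0 within S)"
      by simp
  qed
  then show "((\<lambda>s. seg b (p s) (q s)) \<longlongrightarrow> seg b (p s0) (q s0)) (at s0 within S)"
    by (rule LIM_zero_cancel)
qed

text \<open>Along a short segment the line integral is b z \<bullet> h up to a quadratic error; this makes
  the potential built from segment integrals differentiable.\<close>

lemma seg_first_order:
  "\<bar>seg b z (z + h) - b z \<bullet> h\<bar> \<le> L * (norm h)\<^sup>2"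
proof -
  have "((\<lambda>r. (b (z + r *\<^sub>R h) - b z) \<bullet> h) has_integral seg b z (z + h) - b z \<bullet> h) {0..1}"
    using has_integral_diff[OF seg_has_integral[OF continuous, of z "z + h"]
        has_integral_const_real[of "b z \<bullet> h" 0 1]]
    by (simp add: inner_diff_left)
  then have "seg b z (z + h) - b z \<bullet> h = integral {0..1} (\<lambda>r. (b (z + r *\<^sub>R h) - b z) \<bullet> h)"
    by (simp add: integral_unique)
  also have "\<bar>\<dots>\<bar> \<le> (L * (norm h)\<^sup>2) * (1 - 0)"
  proof (rule integral_bound[where f="\<lambda>r. (b (z + r *\<^sub>R h) - b z) \<bullet> h", unfolded real_norm_def])
    show "continuous_on {0..1} (\<lambda>r. (b (z + r *\<^sub>R h) - b z) \<bullet> h)"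
      by (intro continuous_intros continuous_on_compose2[OF continuous]) auto
    fix r :: real assume r: "r \<in> {0..1}"
    have "\<bar>(b (z + r *\<^sub>R h) - b z) \<bullet> h\<bar> \<le> norm (b (z + r *\<^sub>R h) - b z) * norm h"
      by (rule Cauchy_Schwarz_ineq2)
    also have "\<dots> \<le> (L * norm h) * norm h"
    proof (rule mult_right_mono)
      have "norm (b (z + r *\<^sub>R h) - b z) \<le> L * norm (r *\<^sub>R h)"
        using lipschitz[of "z + r *\<^sub>R h" z] by simp
      also have "\<dots> \<le> L * norm h"
        using r L_nonneg by (auto intro!: mult_left_mono simp: mult_left_le_one_le)
      finally show "norm (b (z + r *\<^sub>R h) - b z) \<le> L * norm h" .
    qed simp
    finally show "\<bar>(b (z + r *\<^sub>R h) - b z) \<bullet> h\<bar> \<le> L * (norm h)\<^sup>2"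
      by (simp add: power2_eq_square mult.assoc)
  qed simp
  finally show ?thesis by simp
qed

text \<open>If every triangle with vertex y had zero circulation, then U z = seg b y z would be a
  potential of b, i.e. b would be conservative.  Hence some triangle at y circulates.\<close>

lemma nonconservative_triangle:
  assumes "\<not> (\<exists>U::'a \<Rightarrow> real. \<forall>z. (U has_derivative (\<lambda>h. b z \<bullet> h)) (at z))"
  obtains u w where "circ b y u w \<noteq> 0"
proof -
  have "\<exists>u w. circ b y u w \<noteq> 0"
  proof (rule ccontr)
    assume "\<not> ?thesis"
    then have closed: "circ b y u w = 0" for u w by auto
    define U where "U z = seg b y z" for z
    have "(U has_derivative (\<lambda>h. b z \<bullet> h)) (at z)" for z
      unfolding has_derivative_at_alt
    proof (intro conjI allI impI)
      show "bounded_linear (\<lambda>h. b z \<bullet> h)" by (rule bounded_linear_inner_right)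
      fix e :: real assume e: "e > 0"
      show "\<exists>d>0. \<forall>w. norm (w - z) < d \<longrightarrow> norm (U w - U z - b z \<bullet> (w - z)) \<le> e * norm (w - z)"
      proof (intro exI[of _ "e / (L + 1)"] conjI allI impI)
        show "e / (L + 1) > 0" using e L_nonneg by simp
        fix w assume w: "norm (w - z) < e / (L + 1)"
        have "U w - U z = seg b z w"
          using closed[of z w] seg_rev[OF continuous, of y w] unfolding U_def circ_def by simp
        then have "norm (U w - U z - b z \<bullet> (w - z)) \<le> L * norm (w - z) * norm (w - z)"
          using seg_first_order[of z "w - z"] by (simp add: power2_eq_square)
        also have "\<dots> \<le> e * norm (w - z)"
        proof (rule mult_right_mono)
          have "L * norm (w - z) \<le> L * (e / (L + 1))"
            using w L_nonneg by (intro mult_left_mono) auto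
          also have "\<dots> \<le> e" using L_nonneg e by (simp add: field_simps)
          finally show "L * norm (w - z) \<le> e" .
        qed simp
        finally show "norm (U w - U z - b z \<bullet> (w - z)) \<le> e * norm (w - z)" .
      qed
    qed
    then show False using assms by blast
  qed
  then show thesis using that by blast
qed

text \<open>Going n times around triangles y, u, p i (with p i on the segment between u1 and u2) realises
  any prescribed total circulation D, with n growing linearly in the absolute value of D:
  full turns around the circulating triangle plus one partial turn found by continuity.\<close>

lemma circulation_fan:
  assumes "circ b y u1 u2 \<noteq> 0"
  obtains u p n where "u \<in> {u1, u2}" "\<And>i. p i \<in> closed_segment u1 u2"
    "(\<Sum>i<n. circ b y u (p i)) = D" "real n \<le> \<bar>D\<bar> / \<bar>circ b y u1 u2\<bar> + 1"
proof -
  define \<kappa> where "\<kappa> = \<bar>circ b y u1 u2\<bar>"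
  define \<epsilon> where "\<epsilon> = (if D \<ge> 0 then 1 else - 1 :: real)"
  have \<kappa>: "\<kappa> > 0" using assms by (simp add: \<kappa>_def)
  have \<epsilon>: "\<epsilon> * \<epsilon> = 1" "\<epsilon> * D = \<bar>D\<bar>" by (auto simp: \<epsilon>_def)
  obtain u u' where u: "u \<in> {u1, u2}" and seg_uu': "closed_segment u u' = closed_segment u1 u2"
    and orient: "circ b y u u' = \<epsilon> * \<kappa>"
  proof (cases "(circ b y u1 u2 \<ge> 0) = (D \<ge> 0)")
    case True
    then show ?thesis using that[of u1 u2] by (auto simp: \<kappa>_def \<epsilon>_def)
  next
    case False
    then show ?thesis using that[of u2 u1] circ_swap[of y u2 u1]
      by (auto simp: \<kappa>_def \<epsilon>_def closed_segment_commute)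
  qed
  define w where "w s = u + s *\<^sub>R (u' - u)" for s :: real
  define g where "g s = \<epsilon> * circ b y u (w s)" for s
  have g_cont: "continuous_on {0..1} g"
    unfolding g_def circ_def w_def by (intro continuous_intros seg_continuous)
  have g_ends: "g 0 = 0" "g 1 = \<kappa>"
    using \<epsilon>(1) orient by (simp_all add: g_def w_def circ_degenerate)
  obtain N s where s: "s \<in> {0..1}" "\<bar>D\<bar> = real N * \<kappa> + g s" "real N \<le> \<bar>D\<bar> / \<kappa>"
    by (rule multiple_plus_intermediate_value[OF g_cont g_ends \<kappa> abs_ge_zero])
  define p where "p i = (if i = N then w s else u')" for i
  have "(\<Sum>i<Suc N. circ b y u (p i)) = real N * circ b y u u' + circ b y u (w s)"
    by (simp add: p_def)
  also have "\<dots> = \<epsilon> * \<bar>D\<bar>"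
    using s(2) orient \<epsilon>(1) by (simp add: g_def algebra_simps)
  also have "\<dots> = D" using \<epsilon> by (auto simp: \<epsilon>_def)
  finally have "(\<Sum>i<Suc N. circ b y u (p i)) = D" .
  moreover have "p i \<in> closed_segment u1 u2" for i
  proof -
    have "w s \<in> closed_segment u u'"
      using s(1) unfolding w_def closed_segment_def by (auto intro!: exI[of _ s] simp: algebra_simps)
    then show ?thesis using seg_uu' by (auto simp: p_def)
  qed
  moreover have "real (Suc N) \<le> \<bar>D\<bar> / \<kappa> + 1" using s(3) by simp
  ultimately show thesis using that[OF u] unfolding \<kappa>_def by blast
qed

end

text \<open>The vertex sequence x, y, u, p 0, y, u, p 1, y, ..., u, p (n - 1), y: a segment from x to y
  followed by n triangular loops based at y.\<close>

definition fan :: "'a \<Rightarrow> 'a \<Rightarrow> 'a \<Rightarrow> (nat \<Rightarrow> 'a) \<Rightarrow> nat \<Rightarrow> 'a" where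
  "fan x y u p k = (if k = 0 then x else if (k - 1) mod 3 = 0 then y
     else if (k - 1) mod 3 = 1 then u else p ((k - 1) div 3))"

lemma fan_vertices:
  "fan x y u p 0 = x" "fan x y u p (Suc (3 * i)) = y"
  "fan x y u p (Suc (Suc (3 * i))) = u" "fan x y u p (Suc (Suc (Suc (3 * i)))) = p i"
proof -
  have "Suc (3 * i) mod 3 = 1" "Suc (Suc (3 * i)) mod 3 = 2" "Suc (Suc (3 * i)) div 3 = i"
    by presburger+
  then show "fan x y u p 0 = x" "fan x y u p (Suc (3 * i)) = y"
    "fan x y u p (Suc (Suc (3 * i))) = u" "fan x y u p (Suc (Suc (Suc (3 * i)))) = p i"
    by (simp_all add: fan_def)
qed

lemma fan_in: "fan x y u p k \<in> {x, y, u} \<union> range p"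
  by (auto simp: fan_def)

lemma fan_edge_sum:
  fixes F :: "'a \<Rightarrow> 'a \<Rightarrow> 'b::comm_monoid_add"
  shows "(\<Sum>k<3 * n + 1. F (fan x y u p k) (fan x y u p (Suc k)))
    = F x y + (\<Sum>i<n. F y u + F u (p i) + F (p i) y)"
proof (induction n)
  case 0
  show ?case by (simp add: fan_def)
next
  case (Suc n)
  let ?e = "\<lambda>k. F (fan x y u p k) (fan x y u p (Suc k))"
  have "3 * Suc n + 1 = Suc (Suc (Suc (3 * n + 1)))" by simp
  then have "(\<Sum>k<3 * Suc n + 1. ?e k)
      = (\<Sum>k<3 * n + 1. ?e k) + ?e (3 * n + 1) + ?e (Suc (3 * n + 1)) + ?e (Suc (Suc (3 * n + 1)))"
    by (simp only: sum.lessThan_Suc)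
  moreover have "fan x y u p (Suc (Suc (Suc (Suc (3 * n))))) = y"
  proof -
    have "Suc (3 * Suc n) = Suc (Suc (Suc (Suc (3 * n))))" by simp
    then show ?thesis by (metis fan_vertices(2))
  qed
  ultimately show ?case
    using Suc.IH fan_vertices(2-4)[where x=x and y=y and u=u and p=p and i=n]
    by (simp add: add.assoc[symmetric])
qed

text \<open>The polygonal path pgon T M v runs through the vertices v 0, ..., v M on [0, T], traversing
  each edge in time T / M; the k-th edge is weighted by the clamped local time of its slot.\<close>

definition clamp01 :: "real \<Rightarrow> real" where "clamp01 u = max 0 (min 1 u)"

definition pgon :: "real \<Rightarrow> nat \<Rightarrow> (nat \<Rightarrow> 'a::real_normed_vector) \<Rightarrow> real \<Rightarrow> 'a" where
  "pgon T M v t = v 0 + (\<Sum>k<M. clamp01 (t * real M / T - real k) *\<^sub>R (v (Suc k) - v k))"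

lemma clamp01_lipschitz: "\<bar>clamp01 a - clamp01 b\<bar> \<le> \<bar>a - b\<bar>"
  by (auto simp: clamp01_def max_def min_def)

lemma clamped_sum_on_slot:
  fixes v :: "nat \<Rightarrow> 'a::real_normed_vector"
  assumes "j < M" "real j \<le> s" "s \<le> real j + 1"
  shows "v 0 + (\<Sum>k<M. clamp01 (s - real k) *\<^sub>R (v (Suc k) - v k)) = v j + (s - real j) *\<^sub>R (v (Suc j) - v j)"
proof -
  define f where "f k = clamp01 (s - real k) *\<^sub>R (v (Suc k) - v k)" for k
  have "(\<Sum>k<M. f k) = (\<Sum>k\<in>{0..<j}. f k) + (\<Sum>k\<in>{j..<M}. f k)"
    using assms(1) by (simp add: lessThan_atLeast0 sum.atLeastLessThan_concat)
  also have "(\<Sum>k\<in>{j..<M}. f k) = f j + (\<Sum>k\<in>{Suc j..<M}. f k)"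
    using assms(1) by (simp add: sum.atLeast_Suc_lessThan)
  also have "(\<Sum>k\<in>{Suc j..<M}. f k) = 0"
  proof (rule sum.neutral, clarify)
    fix k assume "k \<in> {Suc j..<M}"
    then have "s - real k \<le> 0" using assms by auto
    then show "f k = 0" by (simp add: f_def clamp01_def)
  qed
  also have "(\<Sum>k\<in>{0..<j}. f k) = (\<Sum>k<j. v (Suc k) - v k)"
  proof -
    have "f k = v (Suc k) - v k" if "k < j" for k
    proof -
      have "s - real k \<ge> 1" using that assms by auto
      then show ?thesis by (simp add: f_def clamp01_def)
    qed
    then show ?thesis by (simp add: lessThan_atLeast0)
  qed
  also have "\<dots> = v j - v 0" by (rule sum_lessThan_telescope)
  also have "f j = (s - real j) *\<^sub>R (v (Suc j) - v j)"
    using assms by (simp add: f_def clamp01_def)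
  finally show ?thesis unfolding f_def by (simp add: algebra_simps)
qed

lemma pgon_piece:
  fixes v :: "nat \<Rightarrow> 'a::real_normed_vector"
  assumes T: "T > 0" and "j < M" "real j * T / real M \<le> t" "t \<le> real (Suc j) * T / real M"
  shows "pgon T M v t = v j + (t * real M / T - real j) *\<^sub>R (v (Suc j) - v j)"
proof -
  have M: "real M > 0" using assms by simp
  have "real j \<le> t * real M / T" using assms(3) T M by (simp add: field_simps)
  moreover have "t * real M / T \<le> real j + 1" using assms(4) T M by (simp add: field_simps)
  ultimately show ?thesis unfolding pgon_def using clamped_sum_on_slot[OF assms(2)] by blast
qed

lemma pgon_0: "pgon T M v 0 = v 0"
  by (simp add: pgon_def clamp01_def)

lemma pgon_T:
  assumes "T > 0"
  shows "pgon T M v T = v M"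
proof -
  have "clamp01 (T * real M / T - real k) = 1" if "k < M" for k
    using that assms by (simp add: clamp01_def)
  then have "pgon T M v T = v 0 + (\<Sum>k<M. v (Suc k) - v k)"
    unfolding pgon_def by (intro arg_cong2[where f="(+)"] sum.cong) auto
  then show ?thesis by (simp add: sum_lessThan_telescope)
qed

lemma pgon_lipschitz:
  fixes v :: "nat \<Rightarrow> 'a::real_normed_vector"
  assumes T: "T > 0"
  shows "norm (pgon T M v t - pgon T M v t')
    \<le> (real M / T * (\<Sum>k<M. norm (v (Suc k) - v k))) * \<bar>t - t'\<bar>"
proof -
  define w where "w s k = clamp01 (s * real M / T - real k)" for s k
  have "pgon T M v t - pgon T M v t' = (\<Sum>k<M. (w t k - w t' k) *\<^sub>R (v (Suc k) - v k))"
    unfolding pgon_def w_def by (simp add: sum_subtractf scaleR_diff_left)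
  also have "norm \<dots> \<le> (\<Sum>k<M. \<bar>w t k - w t' k\<bar> * norm (v (Suc k) - v k))"
    by (rule order_trans[OF norm_sum]) simp
  also have "\<dots> \<le> (\<Sum>k<M. (real M / T * \<bar>t - t'\<bar>) * norm (v (Suc k) - v k))"
  proof (rule sum_mono)
    fix k
    have "\<bar>w t k - w t' k\<bar> \<le> \<bar>real M / T * (t - t')\<bar>"
      using clamp01_lipschitz[of "t * real M / T - real k" "t' * real M / T - real k"]
      unfolding w_def by (simp add: algebra_simps diff_divide_distrib)
    also have "\<dots> = real M / T * \<bar>t - t'\<bar>" using T by (simp add: abs_mult)
    finally show "\<bar>w t k - w t' k\<bar> * norm (v (Suc k) - v k)
        \<le> (real M / T * \<bar>t - t'\<bar>) * norm (v (Suc k) - v k)"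
      by (rule mult_right_mono) simp
  qed
  also have "\<dots> = (real M / T * (\<Sum>k<M. norm (v (Suc k) - v k))) * \<bar>t - t'\<bar>"
    by (simp add: sum_distrib_left sum_distrib_right mult_ac)
  finally show ?thesis .
qed

lemma lipschitz_abs_cont:
  fixes f :: "real \<Rightarrow> 'a::real_normed_vector"
  assumes lip: "\<And>t t'. norm (f t - f t') \<le> L * \<bar>t - t'\<bar>" and L: "L \<ge> 0"
  shows "abs_cont_on S f"
  unfolding abs_cont_on_def
proof (intro allI impI)
  fix e :: real assume e: "e > 0"
  show "\<exists>d>0. \<forall>n a b. (\<forall>i<n. a i \<le> b i \<and> {a i..b i} \<subseteq> S) \<and>
              (\<forall>i<n. \<forall>j<n. i \<noteq> j \<longrightarrow> b i \<le> a j \<or> b j \<le> a i) \<and> (\<Sum>i<n. b i - a i) < d \<longrightarrow>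
              (\<Sum>i<n. norm (f (b i) - f (a i))) < e"
  proof (intro exI[of _ "e / (L + 1)"] conjI allI impI)
    show "e / (L + 1) > 0" using e L by simp
    fix n a b assume H: "(\<forall>i<n. a i \<le> b i \<and> {a i..b i} \<subseteq> S) \<and>
              (\<forall>i<n. \<forall>j<n. i \<noteq> j \<longrightarrow> b i \<le> a j \<or> b j \<le> a i) \<and> (\<Sum>i<n. b i - a i) < e / (L + 1)"
    have "(\<Sum>i<n. norm (f (b i) - f (a i))) \<le> (\<Sum>i<n. L * (b i - a i))"
    proof (rule sum_mono)
      fix i assume "i \<in> {..<n}"
      then have "a i \<le> b i" using H by auto
      then show "norm (f (b i) - f (a i)) \<le> L * (b i - a i)" using lip[of "b i" "a i"] by simp
    qed
    also have "\<dots> = L * (\<Sum>i<n. b i - a i)" by (simp add: sum_distrib_left)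
    also have "\<dots> \<le> L * (e / (L + 1))" using H L by (intro mult_left_mono) auto
    also have "\<dots> < e" using L e by (simp add: field_simps)
    finally show "(\<Sum>i<n. norm (f (b i) - f (a i))) < e" .
  qed
qed

lemma pgon_abs_cont:
  assumes "T > 0"
  shows "abs_cont_on S (pgon T M v)"
  by (rule lipschitz_abs_cont[OF pgon_lipschitz[OF assms]])
    (use assms in \<open>auto intro!: divide_nonneg_pos mult_nonneg_nonneg sum_nonneg\<close>)

lemma pgon_pdot:
  fixes v :: "nat \<Rightarrow> 'a::euclidean_space"
  assumes T: "T > 0" and j: "j < M" and t: "real j * T / real M < t" "t < real (Suc j) * T / real M"
  shows "pdot T (pgon T M v) t = (real M / T) *\<^sub>R (v (Suc j) - v j)"
proof -
  have M: "real M > 0" using j by simp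
  define Op where "Op = {real j * T / real M <..< real (Suc j) * T / real M}"
  define aff where "aff t = v j + (t * real M / T - real j) *\<^sub>R (v (Suc j) - v j)" for t
  have "(aff has_vector_derivative (real M / T) *\<^sub>R (v (Suc j) - v j)) (at t)"
    unfolding aff_def using T by (auto intro!: derivative_eq_intros)
  then have "(pgon T M v has_vector_derivative (real M / T) *\<^sub>R (v (Suc j) - v j)) (at t)"
  proof (rule has_vector_derivative_transform_within_open[where S=Op])
    show "open Op" "t \<in> Op" using t by (auto simp: Op_def)
    fix y assume "y \<in> Op"
    then show "aff y = pgon T M v y"
      unfolding aff_def Op_def by (subst pgon_piece[OF T j]) auto
  qed
  then have D: "(pgon T M v has_vector_derivative (real M / T) *\<^sub>R (v (Suc j) - v j)) (at t within {0..T})"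
    by (rule has_vector_derivative_at_within)
  have tin: "t \<in> {0..T}"
  proof -
    have "0 \<le> real j * T / real M" using T M by simp
    moreover have "real (Suc j) * T / real M \<le> T"
    proof -
      have "real (Suc j) \<le> real M" using j by simp
      then have "real (Suc j) * T \<le> T * real M" using T by (simp add: mult.commute mult_left_mono)
      then show ?thesis using M by (simp add: pos_divide_le_eq)
    qed
    ultimately show ?thesis using t by auto
  qed
  show ?thesis unfolding pdot_def
    by (rule vector_derivative_within_closed_interval[OF T tin D])
qed

lemma has_integral_uniform_pieces:
  fixes h :: "real \<Rightarrow> real" and F :: "nat \<Rightarrow> real \<Rightarrow> real"
  assumes T: "T > 0" and M: "M > 0"
    and cont: "\<And>k. k < M \<Longrightarrow> continuous_on {real k * T / real M .. real (Suc k) * T / real M} (F k)"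
    and eq: "\<And>k t. k < M \<Longrightarrow> real k * T / real M < t \<Longrightarrow> t < real (Suc k) * T / real M \<Longrightarrow> h t = F k t"
  shows "(h has_integral (\<Sum>k<M. integral {real k * T / real M .. real (Suc k) * T / real M} (F k))) {0..T}"
proof -
  have "m \<le> M \<Longrightarrow> (h has_integral (\<Sum>k<m. integral {real k * T / real M .. real (Suc k) * T / real M} (F k))) {0..real m * T / real M}" for m
  proof (induction m)
    case 0 show ?case by (simp add: has_integral_refl)
  next
    case (Suc m)
    define a where "a = real m * T / real M"
    define c where "c = real (Suc m) * T / real M"
    have i1: "(h has_integral (\<Sum>k<m. integral {real k * T / real M .. real (Suc k) * T / real M} (F k))) {0..a}"
      using Suc unfolding a_def by simp
    have "(F m has_integral integral {a..c} (F m)) {a..c}"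
      using cont[of m] Suc.prems unfolding a_def c_def by (simp add: integrable_continuous_interval integrable_integral)
    then have i2: "(h has_integral integral {a..c} (F m)) {a..c}"
    proof (rule has_integral_spike_finite[rotated 2])
      show "finite {a, c}" by simp
      fix x assume "x \<in> {a..c} - {a, c}"
      then show "h x = F m x" using eq[of m x] Suc.prems unfolding a_def c_def by auto
    qed
    have "0 \<le> a" using T M unfolding a_def by simp
    moreover have "a \<le> c" using T M unfolding a_def c_def by (simp add: divide_right_mono)
    ultimately have "(h has_integral (\<Sum>k<m. integral {real k * T / real M .. real (Suc k) * T / real M} (F k)) + integral {a..c} (F m)) {0..c}"
      by (rule has_integral_combine[OF _ _ i1 i2])
    then show ?case unfolding a_def c_def by simp
  qed
  from this[of M] show ?thesis using M by simp
qed

lemma seg_piece_has_integral: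
  assumes cb: "continuous_on UNIV b" and T: "T > 0" and M: "M > 0"
  shows "((\<lambda>t. b (p + (t * real M / T - real k) *\<^sub>R (q - p)) \<bullet> ((real M / T) *\<^sub>R (q - p)))
           has_integral seg b p q) {real k * T / real M .. real (Suc k) * T / real M}"
proof -
  define m where "m = real M / T"
  have m: "m > 0" using T M by (simp add: m_def)
  define f where "f r = b (p + r *\<^sub>R (q - p)) \<bullet> (q - p)" for r
  have "(f has_integral seg b p q) (cbox 0 1)"
    using seg_has_integral[OF cb, of p q] unfolding f_def by simp
  from has_integral_affinity[OF this, of m "- real k"] m
  have "((\<lambda>x. f (m * x - real k)) has_integral (1 / m) * seg b p q)
          ((\<lambda>x. (1 / m) * x + real k / m) ` {0..1})"
    by simp
  also have "(\<lambda>x. (1 / m) * x + real k / m) ` {0..1} = {real k * T / real M .. real (Suc k) * T / real M}"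
  proof -
    have A: "(\<lambda>x. (1 / m) * x + real k / m) ` {0..1} = {real k / m .. 1 / m + real k / m}"
      using m by (subst image_affinity_atLeastAtMost) simp
    have e1: "real k / m = real k * T / real M" using T M by (simp add: m_def)
    have e2: "1 / m + real k * T / real M = real (Suc k) * T / real M"
      using T M by (simp add: m_def add_divide_distrib algebra_simps)
    show ?thesis by (rule trans[OF A]) (simp only: e1 e2)
  qed
  finally have "((\<lambda>x. m * f (m * x - real k)) has_integral m * ((1 / m) * seg b p q)) {real k * T / real M .. real (Suc k) * T / real M}"
    by (rule has_integral_mult_right)
  moreover have "m * f (m * x - real k) = b (p + (x * real M / T - real k) *\<^sub>R (q - p)) \<bullet> ((real M / T) *\<^sub>R (q - p))" for x
  proof -
    have e: "real M / T * x = x * real M / T" by simp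
    show ?thesis unfolding f_def m_def inner_scaleR_right e by (rule refl)
  qed
  ultimately show ?thesis using m by simp
qed

lemma pgon_in_segment:
  fixes v :: "nat \<Rightarrow> 'a::real_normed_vector"
  assumes T: "T > 0" and k: "k < M" and t: "t \<in> {real k * T / real M .. real (Suc k) * T / real M}"
  shows "pgon T M v t \<in> closed_segment (v k) (v (Suc k))"
proof -
  have M: "real M > 0" using k by simp
  define \<theta> where "\<theta> = t * real M / T - real k"
  have "real k * T \<le> t * real M" "t * real M \<le> real (Suc k) * T"
    using t M by (auto simp: field_simps)
  then have "0 \<le> \<theta>" "\<theta> \<le> 1" using T by (auto simp: \<theta>_def field_simps)
  moreover have "pgon T M v t = (1 - \<theta>) *\<^sub>R v k + \<theta> *\<^sub>R v (Suc k)"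
    using pgon_piece[OF T k, of t v] t unfolding \<theta>_def by (simp add: algebra_simps)
  ultimately show ?thesis unfolding closed_segment_def by blast
qed

lemma pgon_in_H_space:
  fixes v :: "nat \<Rightarrow> 'a::euclidean_space"
  assumes T: "T > 0" and M: "M > 0"
  shows "pgon T M v \<in> H_space T"
proof -
  have "((\<lambda>t. (norm (pdot T (pgon T M v) t))\<^sup>2) has_integral
      (\<Sum>k<M. integral {real k * T / real M .. real (Suc k) * T / real M}
                 (\<lambda>t. (norm ((real M / T) *\<^sub>R (v (Suc k) - v k)))\<^sup>2))) {0..T}"
    by (rule has_integral_uniform_pieces[OF T M]) (auto simp: pgon_pdot[OF T])
  then show ?thesis unfolding H_space_def using pgon_abs_cont[OF T] by blast
qed

lemma pgon_line_integral:
  fixes v :: "nat \<Rightarrow> 'a::euclidean_space"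
  assumes b: "continuous_on UNIV b" and T: "T > 0" and M: "M > 0"
  shows "((\<lambda>t. b (pgon T M v t) \<bullet> pdot T (pgon T M v) t) has_integral
           (\<Sum>k<M. seg b (v k) (v (Suc k)))) {0..T}"
proof -
  define aff where "aff k t = v k + (t * real M / T - real k) *\<^sub>R (v (Suc k) - v k)" for k t
  define d where "d k = (real M / T) *\<^sub>R (v (Suc k) - v k)" for k
  have "((\<lambda>t. b (pgon T M v t) \<bullet> pdot T (pgon T M v) t) has_integral
      (\<Sum>k<M. integral {real k * T / real M .. real (Suc k) * T / real M} (\<lambda>t. b (aff k t) \<bullet> d k))) {0..T}"
  proof (rule has_integral_uniform_pieces[OF T M])
    fix k assume "k < M"
    show "continuous_on {real k * T / real M .. real (Suc k) * T / real M} (\<lambda>t. b (aff k t) \<bullet> d k)"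
      unfolding aff_def using T by (intro continuous_intros continuous_on_compose2[OF b]) auto
  qed (auto simp: aff_def d_def pgon_piece[OF T] pgon_pdot[OF T])
  moreover have "integral {real k * T / real M .. real (Suc k) * T / real M} (\<lambda>t. b (aff k t) \<bullet> d k)
      = seg b (v k) (v (Suc k))" for k
    unfolding aff_def d_def by (rule integral_unique[OF seg_piece_has_integral[OF b T M]])
  ultimately show ?thesis by simp
qed

lemma pgon_rate_bound:
  fixes v :: "nat \<Rightarrow> 'a::euclidean_space"
  assumes c: "continuous_on UNIV c" and T: "T > 0" and M: "M > 0"
    and steps: "\<And>k. k < M \<Longrightarrow> norm (v (Suc k) - v k) \<le> E"
    and vertices: "\<And>k. k \<le> M \<Longrightarrow> v k \<in> S" and S: "convex S"
    and c_bound: "\<And>z. z \<in> S \<Longrightarrow> norm (c z) \<le> Bc"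
  shows "rate_I c T (pgon T M v) \<le> (real M)\<^sup>2 * E\<^sup>2 / T + T * Bc\<^sup>2"
proof -
  define \<phi> where "\<phi> = pgon T M v"
  define aff where "aff k t = v k + (t * real M / T - real k) *\<^sub>R (v (Suc k) - v k)" for k t
  define d where "d k = (real M / T) *\<^sub>R (v (Suc k) - v k)" for k
  define I where "I k = {real k * T / real M .. real (Suc k) * T / real M}" for k
  define K where "K = 2 * ((real M / T) * E)\<^sup>2 + 2 * Bc\<^sup>2"
  have Mr: "real M > 0" using M by simp
  have aff_cont: "continuous_on (I k) (\<lambda>t. (norm (d k - c (aff k t)))\<^sup>2)" for k
    unfolding aff_def using T by (intro continuous_intros continuous_on_compose2[OF c]) auto
  have "((\<lambda>t. (norm (pdot T \<phi> t - c (\<phi> t)))\<^sup>2) has_integral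
      (\<Sum>k<M. integral (I k) (\<lambda>t. (norm (d k - c (aff k t)))\<^sup>2))) {0..T}"
    unfolding I_def \<phi>_def
    by (rule has_integral_uniform_pieces[OF T M aff_cont[unfolded I_def]])
      (auto simp: aff_def d_def pgon_piece[OF T] pgon_pdot[OF T])
  then have "integral {0..T} (\<lambda>t. (norm (pdot T \<phi> t - c (\<phi> t)))\<^sup>2)
      = (\<Sum>k<M. integral (I k) (\<lambda>t. (norm (d k - c (aff k t)))\<^sup>2))"
    by (rule integral_unique)
  also have "\<dots> \<le> (\<Sum>k<M. K * (T / real M))"
  proof (rule sum_mono)
    fix k assume k: "k \<in> {..<M}"
    have "\<bar>integral (I k) (\<lambda>t. (norm (d k - c (aff k t)))\<^sup>2)\<bar>
        \<le> K * (real (Suc k) * T / real M - real k * T / real M)"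
      unfolding I_def
    proof (rule integral_bound[where f="\<lambda>t. (norm (d k - c (aff k t)))\<^sup>2", unfolded real_norm_def])
      show "real k * T / real M \<le> real (Suc k) * T / real M"
        using T Mr by (simp add: divide_right_mono)
      show "continuous_on {real k * T / real M .. real (Suc k) * T / real M} (\<lambda>t. (norm (d k - c (aff k t)))\<^sup>2)"
        using aff_cont unfolding I_def .
      fix t assume t: "t \<in> {real k * T / real M .. real (Suc k) * T / real M}"
      have "aff k t = pgon T M v t"
        using pgon_piece[OF T, of k M t v] k t unfolding aff_def by auto
      then have "aff k t \<in> S"
        using pgon_in_segment[OF T, of k M t v] k t
          closed_segment_subset[OF vertices vertices S, of k "Suc k"] by auto
      then have n2: "norm (c (aff k t)) \<le> Bc" by (rule c_bound)
      have n1: "norm (d k) \<le> (real M / T) * E"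
        unfolding d_def using steps[of k] k T by (auto intro!: mult_left_mono divide_right_mono)
      have "\<bar>(norm (d k - c (aff k t)))\<^sup>2\<bar> \<le> (norm (d k) + norm (c (aff k t)))\<^sup>2"
        using norm_triangle_ineq4[of "d k" "c (aff k t)"] by (simp add: power_mono)
      also have "\<dots> \<le> 2 * (norm (d k))\<^sup>2 + 2 * (norm (c (aff k t)))\<^sup>2"
        by (smt (verit, best) sum_squares_bound power2_sum)
      also have "\<dots> \<le> K" unfolding K_def
        using n1 n2 by (intro add_mono mult_left_mono power_mono) auto
      finally show "\<bar>(norm (d k - c (aff k t)))\<^sup>2\<bar> \<le> K" .
    qed
    then have "integral (I k) (\<lambda>t. (norm (d k - c (aff k t)))\<^sup>2)
        \<le> K * (real (Suc k) * T / real M - real k * T / real M)"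
      by linarith
    also have "\<dots> = K * (T / real M)"
      using T Mr by (simp add: field_simps)
    finally show "integral (I k) (\<lambda>t. (norm (d k - c (aff k t)))\<^sup>2) \<le> K * (T / real M)" .
  qed
  also have "\<dots> = K * T" using Mr by simp
  finally have "rate_I c T \<phi> \<le> (1/2) * (K * T)"
    unfolding rate_I_def by simp
  also have "\<dots> = (real M)\<^sup>2 * E\<^sup>2 / T + T * Bc\<^sup>2"
    unfolding K_def using T by (simp add: field_simps power2_eq_square)
  finally show ?thesis unfolding \<phi>_def .
qed

lemma rate_nonneg: "rate_I c T \<phi> \<ge> 0"
proof (cases "(\<lambda>t. (norm (pdot T \<phi> t - c (\<phi> t)))\<^sup>2) integrable_on {0..T}")
  case True then show ?thesis unfolding rate_I_def by (simp add: integral_nonneg)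
next
  case False then show ?thesis unfolding rate_I_def by (simp add: not_integrable_integral)
qed

text \<open>The action is nonnegative, so S is bounded by the action of any admissible path.\<close>

lemma S_fun_le_rate:
  assumes "\<phi> \<in> A_set b T x y q"
  shows "S_fun c b T x y q \<le> rate_I c T \<phi>"
  unfolding S_fun_def
proof (rule cInf_lower)
  show "rate_I c T \<phi> \<in> rate_I c T ` A_set b T x y q" using assms by simp
  show "bdd_below (rate_I c T ` A_set b T x y q)"
    by (rule bdd_belowI[of _ 0]) (auto simp: rate_nonneg)
qed

lemma C1_map_continuous:
  assumes "C1_map g"
  shows "continuous_on UNIV g"
proof -
  obtain g' where "\<And>x. (g has_derivative blinfun_apply (g' x)) (at x)"
    using assms unfolding C1_map_def by blast
  then show ?thesis
    by (intro continuous_at_imp_continuous_on) (auto intro: has_derivative_continuous)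
qed

text \<open>A map with bounded derivative is globally Lipschitz (mean value inequality).\<close>

lemma lipschitz_of_bounded_derivative:
  fixes b :: "'a::euclidean_space \<Rightarrow> 'b::euclidean_space"
  assumes "\<And>z. (b has_derivative blinfun_apply (b' z)) (at z)" and "bounded (range b')"
  obtains L where "L \<ge> 0" "\<And>u v. norm (b u - b v) \<le> L * norm (u - v)"
proof -
  obtain L where L: "\<And>z. norm (b' z) \<le> L"
    using assms(2) unfolding bounded_iff by blast
  have "norm (b u - b v) \<le> L * norm (u - v)" for u v
  proof (rule differentiable_bound[of UNIV b "\<lambda>z. blinfun_apply (b' z)" L])
    show "(b has_derivative blinfun_apply (b' z)) (at z within UNIV)" for z
      using assms(1) by simp
    show "onorm (blinfun_apply (b' z)) \<le> L" for z
      using L by (simp add: norm_blinfun.rep_eq[symmetric])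
  qed auto
  moreover have "L \<ge> 0" using L[of undefined] norm_ge_zero[of "b' undefined"] by linarith
  ultimately show thesis using that by blast
qed

context bounded_lipschitz_field
begin

text \<open>For each T the fan polygon with the loops of the lemma circulation_fan, chosen so that the
  loops contribute q T / 2 - seg b x y, is admissible, i.e. has L_fun value q.\<close>

lemma polygonal_competitor:
  assumes c: "continuous_on UNIV c" and circ: "circ b y u1 u2 \<noteq> 0" and T: "T > 0"
    and R: "norm x \<le> R" "norm y \<le> R" "norm u1 \<le> R" "norm u2 \<le> R"
    and c_bound: "\<And>z. norm z \<le> R \<Longrightarrow> norm (c z) \<le> Bc"
  obtains \<phi> M where "\<phi> \<in> A_set b T x y q"
    "real M \<le> 3 * (\<bar>q * T / 2 - seg b x y\<bar> / \<bar>circ b y u1 u2\<bar>) + 4"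
    "rate_I c T \<phi> \<le> (real M)\<^sup>2 * (2 * R)\<^sup>2 / T + T * Bc\<^sup>2"
proof -
  obtain u p n where u: "u \<in> {u1, u2}" and p: "\<And>i. p i \<in> closed_segment u1 u2"
    and loop_sum: "(\<Sum>i<n. circ b y u (p i)) = q * T / 2 - seg b x y"
    and n: "real n \<le> \<bar>q * T / 2 - seg b x y\<bar> / \<bar>circ b y u1 u2\<bar> + 1"
    using circulation_fan[OF circ, where D="q * T / 2 - seg b x y"] by blast
  define M where "M = 3 * n + 1"
  define v where "v = fan x y u p"
  have M: "M > 0" by (simp add: M_def)
  have ends: "v 0 = x" "v M = y"
    using fan_vertices(1) fan_vertices(2)[where i=n] by (simp_all add: v_def M_def)
  have "closed_segment u1 u2 \<subseteq> cball 0 R"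
    using R by (intro closed_segment_subset) auto
  then have "p i \<in> cball 0 R" for i using p by blast
  then have ball: "v k \<in> cball 0 R" for k
    using fan_in[of x y u p k] u R unfolding v_def by auto
  have steps: "norm (v (Suc k) - v k) \<le> 2 * R" for k
    using norm_triangle_ineq4[of "v (Suc k)" "v k"] ball[of k] ball[of "Suc k"] by simp
  have "(\<Sum>k<M. seg b (v k) (v (Suc k))) = q * T / 2"
    using fan_edge_sum[where F="seg b" and n=n and x=x and y=y and u=u and p=p] loop_sum
    unfolding M_def v_def circ_def by simp
  then have "L_fun b T (pgon T M v) = q"
    using integral_unique[OF pgon_line_integral[OF continuous T M, of v]] T
    by (simp add: L_fun_def field_simps)
  then have "pgon T M v \<in> A_set b T x y q"
    using pgon_in_H_space[OF T M, of v] pgon_0[of T M v] pgon_T[OF T, of M v] ends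
    by (simp add: A_set_def H_space_from_def)
  moreover have "real M \<le> 3 * (\<bar>q * T / 2 - seg b x y\<bar> / \<bar>circ b y u1 u2\<bar>) + 4"
    using n by (simp add: M_def)
  moreover have "rate_I c T (pgon T M v) \<le> (real M)\<^sup>2 * (2 * R)\<^sup>2 / T + T * Bc\<^sup>2"
    by (rule pgon_rate_bound[where S="cball 0 R"]) (use c T M steps ball c_bound in auto)
  ultimately show thesis by (rule that)
qed

text \<open>Since the number of edges grows at most linearly in T, the action of the competitor is of order
  T + 1 / T.\<close>

lemma linear_cost:
  assumes c: "continuous_on UNIV c" and circ: "circ b y u1 u2 \<noteq> 0"
  obtains K where "K > 0" "\<And>T. T > 0 \<Longrightarrow> \<exists>\<phi>\<in>A_set b T x y q. rate_I c T \<phi> \<le> K * (T + 1 / T)"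
proof -
  define R where "R = norm x + norm y + norm u1 + norm u2"
  have R: "norm x \<le> R" "norm y \<le> R" "norm u1 \<le> R" "norm u2 \<le> R" by (auto simp: R_def)
  have "bounded (c ` cball 0 R)"
    by (intro compact_imp_bounded compact_continuous_image continuous_on_subset[OF c]) auto
  then obtain Bc where c_bound: "\<And>z. norm z \<le> R \<Longrightarrow> norm (c z) \<le> Bc"
    unfolding bounded_iff by force
  define \<kappa> where "\<kappa> = \<bar>circ b y u1 u2\<bar>"
  have \<kappa>: "\<kappa> > 0" using circ by (simp add: \<kappa>_def)
  define \<alpha> where "\<alpha> = 3 * (\<bar>q\<bar> / 2 + \<bar>seg b x y\<bar>) / \<kappa> + 4"
  define K where "K = 2 * \<alpha>\<^sup>2 * (2 * R)\<^sup>2 + Bc\<^sup>2 + 1"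
  have "K > 0" unfolding K_def by (simp add: add_nonneg_pos)
  moreover have "\<exists>\<phi>\<in>A_set b T x y q. rate_I c T \<phi> \<le> K * (T + 1 / T)" if T: "T > 0" for T
  proof -
    obtain \<phi> M where \<phi>: "\<phi> \<in> A_set b T x y q"
      and M: "real M \<le> 3 * (\<bar>q * T / 2 - seg b x y\<bar> / \<kappa>) + 4"
      and rate: "rate_I c T \<phi> \<le> (real M)\<^sup>2 * (2 * R)\<^sup>2 / T + T * Bc\<^sup>2"
      using polygonal_competitor[OF c circ T R c_bound] unfolding \<kappa>_def by metis
    have "\<bar>q * T / 2 - seg b x y\<bar> \<le> \<bar>q\<bar> / 2 * T + \<bar>seg b x y\<bar>"
      using T by (simp add: abs_mult abs_triangle_ineq4 order_trans[OF abs_triangle_ineq4])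
    then have "real M \<le> 3 * (\<bar>q\<bar> / 2) / \<kappa> * T + (3 * \<bar>seg b x y\<bar> / \<kappa> + 4)"
      using M \<kappa> by (simp add: field_simps)
    also have "\<dots> \<le> \<alpha> * T + \<alpha>"
      using T \<kappa> unfolding \<alpha>_def by (intro add_mono mult_right_mono) (auto simp: field_simps)
    finally have "(real M)\<^sup>2 \<le> (\<alpha> * (T + 1))\<^sup>2"
      by (intro power_mono) (auto simp: algebra_simps)
    also have "\<dots> = \<alpha>\<^sup>2 * (T + 1)\<^sup>2" by (simp add: power_mult_distrib)
    also have "\<dots> \<le> \<alpha>\<^sup>2 * (2 * (T\<^sup>2 + 1))"
      using sum_squares_bound[of T 1] by (intro mult_left_mono) (auto simp: power2_sum)
    also have "\<dots> = 2 * \<alpha>\<^sup>2 * (T\<^sup>2 + 1)" by simp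
    finally have "(real M)\<^sup>2 * (2 * R)\<^sup>2 / T \<le> 2 * \<alpha>\<^sup>2 * (T\<^sup>2 + 1) * (2 * R)\<^sup>2 / T"
      using T by (intro divide_right_mono mult_right_mono) auto
    also have "\<dots> = 2 * \<alpha>\<^sup>2 * (2 * R)\<^sup>2 * (T + 1 / T)"
      using T by (simp add: field_simps power2_eq_square)
    finally have "rate_I c T \<phi> \<le> 2 * \<alpha>\<^sup>2 * (2 * R)\<^sup>2 * (T + 1 / T) + Bc\<^sup>2 * T"
      using rate by (simp add: mult.commute)
    also have "\<dots> \<le> K * (T + 1 / T)"
      using T unfolding K_def by (simp add: algebra_simps)
    finally show ?thesis using \<phi> by blast
  qed
  ultimately show thesis by (rule that)
qed

end

theorem lemma5p2:
  fixes V :: "'a::euclidean_space \<Rightarrow> real"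
    and gradV :: "'a \<Rightarrow> 'a"
    and b :: "'a \<Rightarrow> 'a"
    and q :: real and x y :: 'a
  assumes gradV: "\<And>z. (V has_derivative (\<lambda>h. gradV z \<bullet> h)) (at z)"
    and V_C2: "C1_map gradV"
    and V_coercive: "filterlim (\<lambda>z. (gradV z \<bullet> z) / norm z) at_top at_infinity"
    and b_C1: "\<exists>b'::'a \<Rightarrow> 'a \<Rightarrow>\<^sub>L 'a. (\<forall>z. (b has_derivative blinfun_apply (b' z)) (at z))
                  \<and> continuous_on UNIV b' \<and> bounded (range b')"
    and b_bounded: "bounded (range b)"
    and b_not_conservative: "\<not> (\<exists>U::'a \<Rightarrow> real. \<forall>z. (U has_derivative (\<lambda>h. b z \<bullet> h)) (at z))"
    and orth: "\<And>z. gradV z \<bullet> b z = 0"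
  shows "(\<forall>T>0. A_set b T x y q \<noteq> {}) \<and>
         (\<exists>T0>0. \<exists>C>0. \<forall>T\<ge>T0.
            S_fun (\<lambda>z. - (1/2) *\<^sub>R gradV z + b z) b T x y q \<le> C * T)"
proof -
  obtain b' where "\<And>z. (b has_derivative blinfun_apply (b' z)) (at z)" "bounded (range b')"
    using b_C1 by blast
  then obtain L where "L \<ge> 0" "\<And>u v. norm (b u - b v) \<le> L * norm (u - v)"
    using lipschitz_of_bounded_derivative by metis
  moreover obtain B where "\<And>u. norm (b u) \<le> B"
    using b_bounded unfolding bounded_iff by blast
  ultimately interpret bounded_lipschitz_field b L B
    by unfold_locales auto
  define c where "c z = - (1/2) *\<^sub>R gradV z + b z" for z
  have c_cont: "continuous_on UNIV c"
    unfolding c_def by (intro continuous_intros C1_map_continuous[OF V_C2] continuous)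
  obtain u1 u2 where "circ b y u1 u2 \<noteq> 0"
    by (rule nonconservative_triangle[OF b_not_conservative])
  then obtain K where K: "K > 0"
    and cost: "\<And>T. T > 0 \<Longrightarrow> \<exists>\<phi>\<in>A_set b T x y q. rate_I c T \<phi> \<le> K * (T + 1 / T)"
    using linear_cost[OF c_cont] by metis
  have "S_fun c b T x y q \<le> (2 * K) * T" if T: "T \<ge> 1" for T
  proof -
    obtain \<phi> where \<phi>: "\<phi> \<in> A_set b T x y q" and rate: "rate_I c T \<phi> \<le> K * (T + 1 / T)"
      using cost[of T] T by auto
    have "K * (T + 1 / T) \<le> (2 * K) * T"
      using K T mult_mono[of 1 T 1 T] by (simp add: field_simps)
    then show ?thesis using S_fun_le_rate[OF \<phi>, of c] rate by linarith
  qed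
  then show ?thesis
    using cost K unfolding c_def by (intro conjI exI[of _ 1] exI[of _ "2 * K"]) auto
qed

end
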